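(* Let $n\geq1$, $\eta\in\Omega$ and $u,v\in\mathbb N^2$. Then: (1) if $u\neq v$ then $\bar u\neq\bar v$; (2) $|\overline{T_\eta}|=\lambda_{2,n}$; (3) if $v_{j,\eta}=(l,0)$ or $v_{j,\eta}=(0,l)$, then $l\leq j$; (4) $\pi_i(w)\leq n$ for all $w\in T_\eta$ and $i\in\{1,2\}$; (5) if $v_{j,\eta}=(0,p)$, then for every $q$ with $1\leq q<p$ there exists $l<j$ with $v_{l,\eta}=(0,q)$; if $v_{j,\eta}=(p,0)$, then for every $q$ with $1\leq q<p$ there exists $l<j$ with $v_{l,\eta}=(q,0)$; (6) if $v_{j,\eta}=(0,l)$ then $\{v_{i,\eta}\}_{i=1}^j=\{(0,t)\}_{t=1}^l\cup\{(s,0)\}_{s=1}^{j-l}$, and if $v_{j,\eta}=(l,0)$ then $\{v_{i,\eta}\}_{i=1}^j=\{(0,t)\}_{t=1}^{j-l}\cup\{(s,0)\}_{s=1}^l$.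
   Context: $\pi_i$ denotes the $i$-th coordinate. $\Lambda_{2,n}=\{\alpha\in\mathbb N^2:1\leq\alpha_1+\alpha_2\leq n\}$, $\lambda_{2,n}=|\Lambda_{2,n}|=\binom{n+2}{2}-1$; $\bar v=\big(\binom{v_1}{\alpha_1}\binom{v_2}{\alpha_2}\big)_{\alpha\in\Lambda_{2,n}}$. $\Omega$ is the set of $\eta=(z,d_0,\ldots,d_r)$ with $z\in\{0,1\}$, $d_0=0$, $d_i\geq1$ ($1\leq i\leq r$), $\sum_{i=0}^rd_i=n$. For $j\in\{1,\ldots,n\}$, $t\in\{1,\ldots,r\}$ is unique with $\sum_{i=0}^{t-1}d_i<j\leq\sum_{i=0}^td_i$ and $c=j-\sum_{i=0}^{t-1}d_i$; $v_{j,\eta}=(\sum_{i\text{ odd},i<t}d_i+c,0)$ if $z=1,t$ odd; $(0,\sum_{i\text{ even},i<t}d_i+c)$ if $z=1,t$ even; $(0,\sum_{i\text{ odd},i<t}d_i+c)$ if $z=0,t$ odd; $(\sum_{i\text{ even},i<t}d_i+c,0)$ if $z=0,t$ even. $T_{j,\eta}=\{v_{j,\eta}+p(1,1):0\leq p\leq n-j\}$ ($1\leq j\leq n$), $T_{0,\eta}=\{(p,p):1\leq p\leq n\}$, $T_\eta=\bigcup_{j=0}^nT_{j,\eta}$, $\overline{T_\eta}=\{\bar w:w\in T_\eta\}$. *)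

theory Defs
  imports Main
begin

text \<open>Points of N^2 are pairs of naturals; pi_1 = fst, pi_2 = snd.\<close>

definition Lambda2 :: "nat \<Rightarrow> (nat \<times> nat) set" where
  "Lambda2 n = {\<alpha>. 1 \<le> fst \<alpha> + snd \<alpha> \<and> fst \<alpha> + snd \<alpha> \<le> n}"

definition lambda2 :: "nat \<Rightarrow> nat" where
  "lambda2 n = card (Lambda2 n)"

definition vbar :: "nat \<Rightarrow> nat \<times> nat \<Rightarrow> (nat \<times> nat \<Rightarrow> nat)" where
  "vbar n v = (\<lambda>\<alpha>. if \<alpha> \<in> Lambda2 n
                    then (fst v choose fst \<alpha>) * (snd v choose snd \<alpha>) else 0)"

definition Omega :: "nat \<Rightarrow> (nat \<times> nat list) set" where
  "Omega n = {(z, d). z \<in> {0, 1} \<and> d \<noteq> [] \<and> d ! 0 = 0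
              \<and> (\<forall>i. 1 \<le> i \<and> i < length d \<longrightarrow> 1 \<le> d ! i)
              \<and> sum_list d = n}"

definition psum :: "nat list \<Rightarrow> nat \<Rightarrow> nat" where
  "psum d t = (\<Sum>i<t. d ! i)"

definition tidx :: "nat list \<Rightarrow> nat \<Rightarrow> nat" where
  "tidx d j = (THE t. 1 \<le> t \<and> t < length d \<and> psum d t < j \<and> j \<le> psum d (Suc t))"

definition oddsum :: "nat list \<Rightarrow> nat \<Rightarrow> nat" where
  "oddsum d t = (\<Sum>i\<in>{i. i < t \<and> odd i}. d ! i)"

definition evensum :: "nat list \<Rightarrow> nat \<Rightarrow> nat" where
  "evensum d t = (\<Sum>i\<in>{i. i < t \<and> even i}. d ! i)"

definition vj :: "nat \<Rightarrow> nat \<times> nat list \<Rightarrow> nat \<times> nat" where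
  "vj j \<eta> = (let z = fst \<eta>; d = snd \<eta>; t = tidx d j; c = j - psum d t in
     if z = 1 then
       (if odd t then (oddsum d t + c, 0) else (0, evensum d t + c))
     else
       (if odd t then (0, oddsum d t + c) else (evensum d t + c, 0)))"

definition Tj :: "nat \<Rightarrow> nat \<Rightarrow> nat \<times> nat list \<Rightarrow> (nat \<times> nat) set" where
  "Tj n j \<eta> = (if j = 0 then {(p, p) | p. 1 \<le> p \<and> p \<le> n}
               else {(fst (vj j \<eta>) + p, snd (vj j \<eta>) + p) | p. p \<le> n - j})"

definition Teta :: "nat \<Rightarrow> nat \<times> nat list \<Rightarrow> (nat \<times> nat) set" where
  "Teta n \<eta> = (\<Union>j\<in>{0..n}. Tj n j \<eta>)"

end

theory Submission
  imports Defs
begin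

(* Every v_{j,eta} lies on a coordinate axis; which one depends only on z and on the parity of the
   block t of d containing j. Inside a block the points advance one step at a time along their axis,
   so v_{j,eta} = (k, 0) where k counts the i <= j with v_{i,eta} on the first axis, and symmetrically
   for the second axis. Thus j |-> v_{j,eta} is an injective walk that fills both axes from the origin
   outwards, which gives (3), (5) and (6). The sets T_{j,eta} are diagonal rays issuing from the
   distinct points v_{j,eta} (and from (1,1) for j = 0), hence pairwise disjoint, and
   |T_eta| = n + sum_{j=1}^n (n + 1 - j) = lambda_{2,n}. Finally u is read off from bar u at the
   indices (1,0) and (0,1), which gives (1) and lets bar preserve the cardinality of T_eta. *)

fun count_upto :: "(nat \<Rightarrow> bool) \<Rightarrow> nat \<Rightarrow> nat" where
  "count_upto s 0 = 0"
| "count_upto s (Suc j) = count_upto s j + (if s (Suc j) then 1 else 0)"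

lemma count_upto_le: "count_upto s j \<le> j"
  by (induction j) auto

lemma count_upto_mono: "i \<le> j \<Longrightarrow> count_upto s i \<le> count_upto s j"
  by (induction j) (auto simp: le_Suc_eq)

lemma count_upto_add_count_upto_not: "count_upto s j + count_upto (\<lambda>i. \<not> s i) j = j"
  by (induction j) auto

lemma count_upto_pos: "s j \<Longrightarrow> 1 \<le> j \<Longrightarrow> 1 \<le> count_upto s j"
  by (cases j) auto

lemma count_upto_strict_mono:
  assumes "i < j" "s j"
  shows "count_upto s i < count_upto s j"
proof -
  obtain k where j: "j = Suc k" and "i \<le> k"
    using assms(1) by (cases j) auto
  from \<open>i \<le> k\<close> have "count_upto s i \<le> count_upto s k"
    by (rule count_upto_mono)
  then show ?thesis
    using j assms(2) by simp
qed

lemma count_upto_attains: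
  assumes "1 \<le> q" "q \<le> count_upto s j"
  shows "\<exists>i. 1 \<le> i \<and> i \<le> j \<and> s i \<and> count_upto s i = q"
  using assms
proof (induction j)
  case (Suc j)
  show ?case
  proof (cases "q \<le> count_upto s j")
    case True
    then show ?thesis
      using Suc by (metis le_SucI)
  next
    case False
    then have "s (Suc j)" "count_upto s (Suc j) = q"
      using Suc.prems by (auto split: if_splits)
    then show ?thesis
      by auto
  qed
qed simp

definition axis_walk :: "(nat \<Rightarrow> bool) \<Rightarrow> nat \<Rightarrow> nat \<times> nat" where
  "axis_walk s j = (if s j then (count_upto s j, 0) else (0, count_upto (\<lambda>i. \<not> s i) j))"

lemma axis_walk_not: "axis_walk (\<lambda>i. \<not> s i) j = prod.swap (axis_walk s j)"
  by (simp add: axis_walk_def)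

lemma axis_walk_le: "fst (axis_walk s j) \<le> j" "snd (axis_walk s j) \<le> j"
  using count_upto_le[of s j] count_upto_le[of "\<lambda>i. \<not> s i" j] by (auto simp: axis_walk_def)

lemma axis_walk_on_axis: "fst (axis_walk s j) = 0 \<or> snd (axis_walk s j) = 0"
  by (simp add: axis_walk_def)

lemma axis_walk_nonzero: "1 \<le> j \<Longrightarrow> axis_walk s j \<noteq> (0, 0)"
  using count_upto_pos[of s j] count_upto_pos[of "\<lambda>i. \<not> s i" j] by (auto simp: axis_walk_def)

lemma axis_walk_neq_later:
  assumes "i < j"
  shows "axis_walk s i \<noteq> axis_walk s j"
proof -
  have "axis_walk s i \<noteq> axis_walk s j" if "s j" for s
  proof -
    have "fst (axis_walk s i) \<le> count_upto s i"
      by (simp add: axis_walk_def)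
    also have "\<dots> < count_upto s j"
      using assms that by (rule count_upto_strict_mono)
    also have "\<dots> = fst (axis_walk s j)"
      using that by (simp add: axis_walk_def)
    finally show ?thesis
      by auto
  qed
  from this[of s] this[of "\<lambda>i. \<not> s i"] show ?thesis
    by (cases "s j") (auto simp: axis_walk_not)
qed

lemma inj_axis_walk: "inj (axis_walk s)"
  by (metis injI axis_walk_neq_later linorder_neqE_nat)

lemma axis_walk_fst_predecessor:
  assumes "axis_walk s j = (p, 0)" "1 \<le> q" "q < p"
  shows "\<exists>l. 1 \<le> l \<and> l < j \<and> axis_walk s l = (q, 0)"
proof -
  have "s j" and count: "count_upto s j = p"
    using assms by (auto simp: axis_walk_def split: if_splits)
  obtain l where "1 \<le> l" "l \<le> j" "s l" "count_upto s l = q"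
    using count_upto_attains[of q s j] assms count by auto
  moreover have "l \<noteq> j"
    using \<open>count_upto s l = q\<close> count assms(3) by auto
  ultimately show ?thesis
    by (auto simp: axis_walk_def)
qed

lemma axis_walk_snd_predecessor:
  assumes "axis_walk s j = (0, p)" "1 \<le> q" "q < p"
  shows "\<exists>l. 1 \<le> l \<and> l < j \<and> axis_walk s l = (0, q)"
  using axis_walk_fst_predecessor[of "\<lambda>i. \<not> s i" j p q] assms
  by (auto simp: axis_walk_not prod.swap_def prod_eq_iff)

lemma axis_walk_image:
  "axis_walk s ` {1..j} =
     {(0, t) | t. 1 \<le> t \<and> t \<le> count_upto (\<lambda>i. \<not> s i) j} \<union> {(a, 0) | a. 1 \<le> a \<and> a \<le> count_upto s j}"
  (is "_ = ?Snd \<union> ?Fst")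
proof
  show "axis_walk s ` {1..j} \<subseteq> ?Snd \<union> ?Fst"
  proof
    fix x assume "x \<in> axis_walk s ` {1..j}"
    then obtain i where i: "1 \<le> i" "i \<le> j" "x = axis_walk s i"
      by auto
    then show "x \<in> ?Snd \<union> ?Fst"
      using count_upto_mono[OF \<open>i \<le> j\<close>, of s] count_upto_mono[OF \<open>i \<le> j\<close>, of "\<lambda>i. \<not> s i"]
        count_upto_pos[of s i] count_upto_pos[of "\<lambda>i. \<not> s i" i]
      by (auto simp: axis_walk_def)
  qed
  show "?Snd \<union> ?Fst \<subseteq> axis_walk s ` {1..j}"
  proof
    fix x assume "x \<in> ?Snd \<union> ?Fst"
    then consider t where "x = (0, t)" "1 \<le> t" "t \<le> count_upto (\<lambda>i. \<not> s i) j"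
      | a where "x = (a, 0)" "1 \<le> a" "a \<le> count_upto s j"
      by blast
    then show "x \<in> axis_walk s ` {1..j}"
    proof cases
      case 1
      then obtain i where "1 \<le> i" "i \<le> j" "\<not> s i" "count_upto (\<lambda>i. \<not> s i) i = t"
        using count_upto_attains[of t "\<lambda>i. \<not> s i" j] by auto
      then show ?thesis
        using 1 by (auto simp: axis_walk_def intro!: image_eqI[of _ _ i])
    next
      case 2
      then obtain i where "1 \<le> i" "i \<le> j" "s i" "count_upto s i = a"
        using count_upto_attains[of a s j] by auto
      then show ?thesis
        using 2 by (auto simp: axis_walk_def intro!: image_eqI[of _ _ i])
    qed
  qed
qed

lemma axis_walk_image_fst_endpoint:
  assumes "1 \<le> j" "axis_walk s j = (l, 0)"
  shows "axis_walk s ` {1..j} = {(0, t) | t. 1 \<le> t \<and> t \<le> j - l} \<union> {(a, 0) | a. 1 \<le> a \<and> a \<le> l}"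
proof -
  have "count_upto s j = l" "count_upto (\<lambda>i. \<not> s i) j = j - l"
    using assms count_upto_pos[of "\<lambda>i. \<not> s i" j] count_upto_add_count_upto_not[of s j]
    by (auto simp: axis_walk_def split: if_splits)
  then show ?thesis
    using axis_walk_image[of s j] by simp
qed

lemma axis_walk_image_snd_endpoint:
  assumes "1 \<le> j" "axis_walk s j = (0, l)"
  shows "axis_walk s ` {1..j} = {(0, t) | t. 1 \<le> t \<and> t \<le> l} \<union> {(a, 0) | a. 1 \<le> a \<and> a \<le> j - l}"
proof -
  have "count_upto (\<lambda>i. \<not> s i) j = l" "count_upto s j = j - l"
    using assms count_upto_pos[of s j] count_upto_add_count_upto_not[of s j]
    by (auto simp: axis_walk_def split: if_splits)
  then show ?thesis
    using axis_walk_image[of s j] by simp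
qed

definition psum_filter :: "nat list \<Rightarrow> (nat \<Rightarrow> bool) \<Rightarrow> nat \<Rightarrow> nat" where
  "psum_filter d P t = (\<Sum>k<t. if P k then d ! k else 0)"

lemma psum_Suc: "psum d (Suc t) = psum d t + d ! t"
  by (simp add: psum_def)

lemma psum_mono: "a \<le> b \<Longrightarrow> psum d a \<le> psum d b"
  unfolding psum_def by (rule sum_mono2) auto

lemma psum_filter_Suc: "psum_filter d P (Suc t) = psum_filter d P t + (if P t then d ! t else 0)"
  by (simp add: psum_filter_def)

lemma oddsum_eq_psum_filter: "oddsum d t = psum_filter d odd t"
  unfolding oddsum_def psum_filter_def by (subst sum.inter_filter[symmetric]) (auto intro!: sum.cong)

lemma evensum_eq_psum_filter: "evensum d t = psum_filter d even t"
  unfolding evensum_def psum_filter_def by (subst sum.inter_filter[symmetric]) (auto intro!: sum.cong)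

locale composition =
  fixes d :: "nat list" and n :: nat
  assumes d_nonempty: "d \<noteq> []" and d_0: "d ! 0 = 0"
    and d_pos: "\<And>i. 1 \<le> i \<Longrightarrow> i < length d \<Longrightarrow> 1 \<le> d ! i"
    and sum_list_d: "sum_list d = n"
begin

lemma psum_length: "psum d (length d) = n"
  using sum_list_d by (simp add: psum_def sum_list_sum_nth atLeast0LessThan)

lemma psum_1: "psum d 1 = 0"
  using d_0 by (simp add: psum_def)

lemma psum_strict_mono:
  assumes "1 \<le> a" "a < b" "b \<le> length d"
  shows "psum d a < psum d b"
proof -
  obtain b' where b: "b = Suc b'" and "a \<le> b'"
    using assms(2) by (cases b) auto
  then have "psum d a \<le> psum d b'"
    by (simp add: psum_mono)
  moreover have "1 \<le> d ! b'"
    using assms b by (intro d_pos) auto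
  ultimately show ?thesis
    using b by (simp add: psum_Suc)
qed

lemma tidx_eqI:
  assumes "1 \<le> t" "t < length d" "psum d t < j" "j \<le> psum d (Suc t)"
  shows "tidx d j = t"
  unfolding tidx_def
proof (rule the_equality)
  fix t' assume t': "1 \<le> t' \<and> t' < length d \<and> psum d t' < j \<and> j \<le> psum d (Suc t')"
  show "t' = t"
  proof (rule ccontr)
    assume "t' \<noteq> t"
    then have "Suc t \<le> t' \<or> Suc t' \<le> t"
      by auto
    then show False
      using psum_mono[of "Suc t" t' d] psum_mono[of "Suc t'" t d] t' assms by auto
  qed
qed (use assms in auto)

lemma tidx_bounds:
  assumes "1 \<le> j" "j \<le> n"
  shows "1 \<le> tidx d j" "tidx d j < length d" "psum d (tidx d j) < j" "j \<le> psum d (Suc (tidx d j))"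
proof -
  define t where "t = (LEAST t. j \<le> psum d (Suc t))"
  have "j \<le> psum d (Suc (length d - 1))"
    using d_nonempty psum_length assms by simp
  then have t_upper: "j \<le> psum d (Suc t)" and "t \<le> length d - 1"
    unfolding t_def by (auto intro: LeastI Least_le)
  have "t \<noteq> 0"
    using t_upper psum_1 assms(1) by (cases t) auto
  then obtain t' where t': "t = Suc t'"
    using not0_implies_Suc by blast
  have "\<not> j \<le> psum d (Suc t')"
    using t' unfolding t_def by (metis lessI not_less_Least)
  then have t_lower: "psum d t < j"
    using t' by simp
  have "1 \<le> t" "t < length d"
    using \<open>t \<noteq> 0\<close> \<open>t \<le> length d - 1\<close> d_nonempty by auto
  moreover have "tidx d j = t"
    using calculation t_lower t_upper by (rule tidx_eqI)
  ultimately show "1 \<le> tidx d j" "tidx d j < length d" "psum d (tidx d j) < j"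
    "j \<le> psum d (Suc (tidx d j))"
    using t_upper t_lower by simp_all
qed

(* Also valid at j = psum d t, which lies in block t - 1: this carries the induction across blocks. *)
lemma count_upto_blockwise:
  assumes "1 \<le> t" "t < length d" "psum d t \<le> j" "j \<le> psum d (Suc t)"
  shows "count_upto (\<lambda>i. P (tidx d i)) j = psum_filter d P t + (if P t then j - psum d t else 0)"
  using assms
proof (induction j arbitrary: t)
  case 0
  have "t = 1"
    using 0 psum_strict_mono[of 1 t] psum_1 by (cases "t = 1") auto
  then show ?case
    using d_0 by (simp add: psum_filter_def)
next
  case (Suc j)
  show ?case
  proof (cases "psum d t \<le> j")
    case True
    moreover have "tidx d (Suc j) = t"
      using Suc.prems True by (intro tidx_eqI) auto
    ultimately show ?thesis
      using Suc by auto
  next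
    case False
    then have boundary: "psum d t = Suc j"
      using Suc.prems by simp
    then obtain t' where t: "t = Suc t'" and "1 \<le> t'"
      using psum_1 Suc.prems(1) by (cases t) (auto simp: le_Suc_eq)
    have "1 \<le> d ! t'"
      using d_pos \<open>1 \<le> t'\<close> t Suc.prems(2) by auto
    then have "psum d t' \<le> j" and "d ! t' = Suc j - psum d t'"
      using boundary t by (simp_all add: psum_Suc)
    moreover have "tidx d (Suc j) = t'"
      using \<open>1 \<le> t'\<close> t Suc.prems(2) \<open>psum d t' \<le> j\<close> boundary by (intro tidx_eqI) auto
    ultimately show ?thesis
      using Suc.IH[of t'] \<open>1 \<le> t'\<close> t Suc.prems(2) boundary
      by (auto simp: psum_filter_Suc)
  qed
qed

lemma count_upto_tidx:
  assumes "1 \<le> j" "j \<le> n"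
  shows "count_upto (\<lambda>i. P (tidx d i)) j
    = psum_filter d P (tidx d j) + (if P (tidx d j) then j - psum d (tidx d j) else 0)"
  using tidx_bounds[OF assms] by (intro count_upto_blockwise) auto

end

lemma composition_Omega: "\<eta> \<in> Omega n \<Longrightarrow> composition (snd \<eta>) n"
  by unfold_locales (auto simp: Omega_def)

definition on_fst_axis :: "nat \<times> nat list \<Rightarrow> nat \<Rightarrow> bool" where
  "on_fst_axis \<eta> j = (if fst \<eta> = 1 then odd (tidx (snd \<eta>) j) else even (tidx (snd \<eta>) j))"

lemma vj_eq_axis_walk:
  assumes "\<eta> \<in> Omega n" "1 \<le> j" "j \<le> n"
  shows "vj j \<eta> = axis_walk (on_fst_axis \<eta>) j"
proof -
  interpret composition "snd \<eta>" n
    using assms(1) by (rule composition_Omega)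
  have "fst \<eta> = 1 \<and> on_fst_axis \<eta> = (\<lambda>i. odd (tidx (snd \<eta>) i))
    \<or> fst \<eta> \<noteq> 1 \<and> on_fst_axis \<eta> = (\<lambda>i. even (tidx (snd \<eta>) i))"
    by (simp add: on_fst_axis_def fun_eq_iff)
  then show ?thesis
    using count_upto_tidx[OF assms(2,3), of odd] count_upto_tidx[OF assms(2,3), of even]
    by (auto simp: vj_def axis_walk_def Let_def oddsum_eq_psum_filter evensum_eq_psum_filter)
qed

lemma vbar_unit_vectors: "1 \<le> n \<Longrightarrow> vbar n u (1, 0) = fst u \<and> vbar n u (0, 1) = snd u"
  by (simp add: vbar_def Lambda2_def)

lemma inj_vbar: "1 \<le> n \<Longrightarrow> inj (vbar n)"
  by (metis injI vbar_unit_vectors prod_eqI)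

lemma finite_Lambda2: "finite (Lambda2 n)"
  by (rule finite_subset[of _ "{0..n} \<times> {0..n}"]) (auto simp: Lambda2_def)

lemma card_Lambda2: "2 * card (Lambda2 n) = n * (n + 3)"
proof (induction n)
  case 0
  have "Lambda2 0 = {}"
    by (auto simp: Lambda2_def)
  then show ?case
    by simp
next
  case (Suc n)
  let ?antidiagonal = "(\<lambda>a. (a, Suc n - a)) ` {0..Suc n}"
  have "Lambda2 (Suc n) = Lambda2 n \<union> ?antidiagonal"
    by (auto simp: Lambda2_def image_iff)
  moreover have "Lambda2 n \<inter> ?antidiagonal = {}"
    by (auto simp: Lambda2_def)
  moreover have "card ?antidiagonal = Suc (Suc n)"
    by (simp add: card_image inj_on_def)
  ultimately have "card (Lambda2 (Suc n)) = card (Lambda2 n) + Suc (Suc n)"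
    by (simp add: card_Un_disjoint finite_Lambda2)
  then show ?case
    using Suc.IH by (simp add: algebra_simps)
qed

lemma vj_le:
  "\<eta> \<in> Omega n \<Longrightarrow> 1 \<le> j \<Longrightarrow> j \<le> n \<Longrightarrow> fst (vj j \<eta>) \<le> j \<and> snd (vj j \<eta>) \<le> j"
  by (simp add: vj_eq_axis_walk axis_walk_le)

lemma vj_fst_predecessor:
  assumes "\<eta> \<in> Omega n" "1 \<le> j" "j \<le> n" "vj j \<eta> = (p, 0)" "1 \<le> q" "q < p"
  shows "\<exists>l. 1 \<le> l \<and> l < j \<and> vj l \<eta> = (q, 0)"
  using assms axis_walk_fst_predecessor[of "on_fst_axis \<eta>" j p q] vj_eq_axis_walk[OF assms(1)]
  by (metis less_imp_le order_trans)

lemma vj_snd_predecessor: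
  assumes "\<eta> \<in> Omega n" "1 \<le> j" "j \<le> n" "vj j \<eta> = (0, p)" "1 \<le> q" "q < p"
  shows "\<exists>l. 1 \<le> l \<and> l < j \<and> vj l \<eta> = (0, q)"
  using assms axis_walk_snd_predecessor[of "on_fst_axis \<eta>" j p q] vj_eq_axis_walk[OF assms(1)]
  by (metis less_imp_le order_trans)

lemma vj_image:
  assumes "\<eta> \<in> Omega n" "j \<le> n"
  shows "(\<lambda>i. vj i \<eta>) ` {1..j} = axis_walk (on_fst_axis \<eta>) ` {1..j}"
  using assms vj_eq_axis_walk by (intro image_cong) auto

lemma vj_image_fst_endpoint:
  assumes "\<eta> \<in> Omega n" "1 \<le> j" "j \<le> n" "vj j \<eta> = (l, 0)"
  shows "(\<lambda>i. vj i \<eta>) ` {1..j} = {(0, t) | t. 1 \<le> t \<and> t \<le> j - l} \<union> {(s, 0) | s. 1 \<le> s \<and> s \<le> l}"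
  using vj_image[OF assms(1,3)] axis_walk_image_fst_endpoint[OF assms(2)] assms(4)
  by (simp add: vj_eq_axis_walk[OF assms(1-3)])

lemma vj_image_snd_endpoint:
  assumes "\<eta> \<in> Omega n" "1 \<le> j" "j \<le> n" "vj j \<eta> = (0, l)"
  shows "(\<lambda>i. vj i \<eta>) ` {1..j} = {(0, t) | t. 1 \<le> t \<and> t \<le> l} \<union> {(s, 0) | s. 1 \<le> s \<and> s \<le> j - l}"
  using vj_image[OF assms(1,3)] axis_walk_image_snd_endpoint[OF assms(2)] assms(4)
  by (simp add: vj_eq_axis_walk[OF assms(1-3)])

(* Slides w along (1,1) onto the coordinate axes: it collapses each ray T_{j,eta} to its origin. *)
definition diag_proj :: "nat \<times> nat \<Rightarrow> nat \<times> nat" where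
  "diag_proj w = (fst w - snd w, snd w - fst w)"

lemma Tj_ray: "1 \<le> j \<Longrightarrow> Tj n j \<eta> = (\<lambda>p. (fst (vj j \<eta>) + p, snd (vj j \<eta>) + p)) ` {0..n - j}"
  by (auto simp: Tj_def)

lemma Tj_0: "Tj n 0 \<eta> = (\<lambda>p. (p, p)) ` {1..n}"
  by (auto simp: Tj_def)

lemma card_Tj: "card (Tj n j \<eta>) = (if j = 0 then n else Suc (n - j))"
  by (cases "j = 0") (simp_all add: Tj_0 Tj_ray card_image inj_on_def)

lemma finite_Tj: "finite (Tj n j \<eta>)"
  by (cases "j = 0") (simp_all add: Tj_0 Tj_ray)

lemma diag_proj_Tj:
  assumes "\<eta> \<in> Omega n" "j \<le> n" "w \<in> Tj n j \<eta>"
  shows "diag_proj w = (if j = 0 then (0, 0) else vj j \<eta>)"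
proof (cases "j = 0")
  case False
  then have "fst (vj j \<eta>) = 0 \<or> snd (vj j \<eta>) = 0"
    using assms vj_eq_axis_walk axis_walk_on_axis by simp
  then show ?thesis
    using assms(3) False by (auto simp: Tj_ray diag_proj_def prod_eq_iff)
qed (use assms(3) in \<open>auto simp: Tj_0 diag_proj_def\<close>)

lemma Tj_disjoint:
  assumes "\<eta> \<in> Omega n" "i \<le> n" "j \<le> n" "i \<noteq> j"
  shows "Tj n i \<eta> \<inter> Tj n j \<eta> = {}"
proof -
  have "(if i = 0 then (0, 0) else vj i \<eta>) \<noteq> (if j = 0 then (0, 0) else vj j \<eta>)"
  proof (cases "i = 0 \<or> j = 0")
    case True
    then show ?thesis
      using assms vj_eq_axis_walk[OF assms(1)] axis_walk_nonzero
      by (metis One_nat_def Suc_leI neq0_conv)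
  next
    case False
    then show ?thesis
      using assms vj_eq_axis_walk[OF assms(1)] inj_axis_walk by (simp add: inj_eq)
  qed
  then show ?thesis
    using diag_proj_Tj[OF assms(1,2)] diag_proj_Tj[OF assms(1,3)] by (metis disjoint_iff)
qed

lemma card_Teta:
  assumes "\<eta> \<in> Omega n"
  shows "2 * card (Teta n \<eta>) = n * (n + 3)"
proof -
  have "card (Teta n \<eta>) = (\<Sum>j = 0..n. card (Tj n j \<eta>))"
    unfolding Teta_def using Tj_disjoint[OF assms] finite_Tj by (intro card_UN_disjoint) auto
  also have "\<dots> = n + (\<Sum>j = 1..n. Suc (n - j))"
    by (simp add: card_Tj sum.atLeast_Suc_atMost)
  also have "(\<Sum>j = 1..n. Suc (n - j)) = (\<Sum>j = 1..n. j)"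
    by (subst sum.atLeastAtMost_rev) (rule sum.cong; auto)
  finally show ?thesis
    using double_gauss_sum_from_Suc_0[of n, where ?'a = nat] by (simp add: algebra_simps)
qed

lemma card_vbar_Teta:
  assumes "1 \<le> n" "\<eta> \<in> Omega n"
  shows "card (vbar n ` Teta n \<eta>) = lambda2 n"
proof -
  have "card (vbar n ` Teta n \<eta>) = card (Teta n \<eta>)"
    using inj_vbar[OF assms(1)] by (simp add: card_image inj_on_subset)
  then show ?thesis
    using card_Teta[OF assms(2)] card_Lambda2[of n] by (simp add: lambda2_def)
qed

lemma Teta_bounded:
  assumes "\<eta> \<in> Omega n" "w \<in> Teta n \<eta>"
  shows "fst w \<le> n \<and> snd w \<le> n"
proof -
  obtain j where "j \<le> n" "w \<in> Tj n j \<eta>"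
    using assms(2) by (auto simp: Teta_def)
  then show ?thesis
    using vj_le[OF assms(1), of j] by (cases "j = 0") (auto simp: Tj_0 Tj_ray)
qed

theorem lemma2p5:
  fixes n :: nat and \<eta> :: "nat \<times> nat list" and u v :: "nat \<times> nat"
  assumes "1 \<le> n" and "\<eta> \<in> Omega n"
  shows "(u \<noteq> v \<longrightarrow> vbar n u \<noteq> vbar n v)
    \<and> card (vbar n ` Teta n \<eta>) = lambda2 n
    \<and> (\<forall>j l. 1 \<le> j \<and> j \<le> n \<and> (vj j \<eta> = (l, 0) \<or> vj j \<eta> = (0, l)) \<longrightarrow> l \<le> j)
    \<and> (\<forall>w\<in>Teta n \<eta>. fst w \<le> n \<and> snd w \<le> n)
    \<and> (\<forall>j p. 1 \<le> j \<and> j \<le> n \<and> vj j \<eta> = (0, p) \<longrightarrow>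
          (\<forall>q. 1 \<le> q \<and> q < p \<longrightarrow> (\<exists>l. 1 \<le> l \<and> l < j \<and> vj l \<eta> = (0, q))))
    \<and> (\<forall>j p. 1 \<le> j \<and> j \<le> n \<and> vj j \<eta> = (p, 0) \<longrightarrow>
          (\<forall>q. 1 \<le> q \<and> q < p \<longrightarrow> (\<exists>l. 1 \<le> l \<and> l < j \<and> vj l \<eta> = (q, 0))))
    \<and> (\<forall>j l. 1 \<le> j \<and> j \<le> n \<and> vj j \<eta> = (0, l) \<longrightarrow>
          (\<lambda>i. vj i \<eta>) ` {1..j} = {(0, t) | t. 1 \<le> t \<and> t \<le> l} \<union> {(s, 0) | s. 1 \<le> s \<and> s \<le> j - l})
    \<and> (\<forall>j l. 1 \<le> j \<and> j \<le> n \<and> vj j \<eta> = (l, 0) \<longrightarrow>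
          (\<lambda>i. vj i \<eta>) ` {1..j} = {(0, t) | t. 1 \<le> t \<and> t \<le> j - l} \<union> {(s, 0) | s. 1 \<le> s \<and> s \<le> l})"
  apply (intro conjI allI impI ballI)
  subgoal using inj_vbar[OF assms(1)] by (simp add: inj_eq)
  subgoal using card_vbar_Teta[OF assms] .
  subgoal for j l using vj_le[OF assms(2), of j] by auto
  subgoal using Teta_bounded[OF assms(2)] by blast
  subgoal using Teta_bounded[OF assms(2)] by blast
  subgoal using vj_snd_predecessor[OF assms(2)] by blast
  subgoal using vj_fst_predecessor[OF assms(2)] by blast
  subgoal by (rule vj_image_snd_endpoint[OF assms(2)]) auto
  subgoal by (rule vj_image_fst_endpoint[OF assms(2)]) auto
  done

end
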